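(* Let $S$ be a sampling of $[n]$ which is non-vacuous, has $c_1$-uniform support with $c_1\ge1$, and is $\tau$-uniform. Then $\frac{|\mathrm{supp}(S)|}{c_1}=\frac n\tau$. Consequently, for $\mathbf W=\mathrm{diag}(w_1,\dots,w_n)\succ0$ and the minibatch sketch $\mathbf S=\mathbf I_S$, the stochastic condition number satisfies $\kappa=p_1=\dots=p_n=\frac\tau n=\frac{c_1}{|\mathrm{supp}(S)|}$.
   Context: $p_C=\Pr(S=C)$, $p_i=\Pr(i\in S)$, $\mathrm{supp}(S)=\{C:p_C>0\}$; non-vacuous: $p_\emptyset=0$; $c_1$-uniform support: $|\{C\in\mathrm{supp}(S):i\in C\}|=c_1$ for all $i$; $\tau$-uniform: $p_i=p_j$ for all $i,j$ and $|S|=\tau$ a.s. $\mathbf I_S$ is the column submatrix of the identity with columns in $S$; $\Pi_{\mathbf S}=\mathbf S(\mathbf S^\top\mathbf W\mathbf S)^\dagger\mathbf S^\top\mathbf W$; $\kappa=\lambda_{\min}(\mathbb{E}[\Pi_{\mathbf S}])$. *)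

theory Defs
  imports "HOL-Probability.Probability_Mass_Function" "Jordan_Normal_Form.Char_Poly"
begin

text \<open>A sampling of [n] is a random subset; we index [n] as {0..<n} (JNF convention).
  It is represented as a pmf on subsets.\<close>

definition is_sampling :: "nat \<Rightarrow> nat set pmf \<Rightarrow> bool" where
  "is_sampling n S \<longleftrightarrow> set_pmf S \<subseteq> Pow {..<n}"

definition incl_prob :: "nat set pmf \<Rightarrow> nat \<Rightarrow> real" where
  "incl_prob S i = measure_pmf.prob S {C. i \<in> C}"

definition non_vacuous :: "nat set pmf \<Rightarrow> bool" where
  "non_vacuous S \<longleftrightarrow> pmf S {} = 0"

definition uniform_support :: "nat \<Rightarrow> nat \<Rightarrow> nat set pmf \<Rightarrow> bool" where
  "uniform_support n c1 S \<longleftrightarrow> (\<forall>i<n. card {C \<in> set_pmf S. i \<in> C} = c1)"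

definition tau_uniform :: "nat \<Rightarrow> nat \<Rightarrow> nat set pmf \<Rightarrow> bool" where
  "tau_uniform n \<tau> S \<longleftrightarrow> (\<forall>i<n. \<forall>j<n. incl_prob S i = incl_prob S j)
     \<and> (AE C in measure_pmf S. card C = \<tau>)"

text \<open>Column submatrix of the n x n identity with columns in C (in increasing order).\<close>
definition I_sub :: "nat \<Rightarrow> nat set \<Rightarrow> real mat" where
  "I_sub n C = mat n (card C) (\<lambda>(i, j). if i = sorted_list_of_set C ! j then 1 else 0)"

definition pinv :: "real mat \<Rightarrow> real mat" where
  "pinv A = (THE X. X \<in> carrier_mat (dim_col A) (dim_row A) \<and> A * X * A = A \<and> X * A * X = X
      \<and> transpose_mat (A * X) = A * X \<and> transpose_mat (X * A) = X * A)"

definition diag_real_mat :: "nat \<Rightarrow> (nat \<Rightarrow> real) \<Rightarrow> real mat" where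
  "diag_real_mat n w = mat n n (\<lambda>(i, j). if i = j then w i else 0)"

definition proj_sketch :: "real mat \<Rightarrow> real mat \<Rightarrow> real mat" where
  "proj_sketch W Sk = Sk * pinv (transpose_mat Sk * W * Sk) * transpose_mat Sk * W"

definition expect_mat :: "nat \<Rightarrow> nat set pmf \<Rightarrow> (nat set \<Rightarrow> real mat) \<Rightarrow> real mat" where
  "expect_mat n S M = mat n n (\<lambda>(i, j). \<Sum>C\<in>set_pmf S. pmf S C * (M C $$ (i, j)))"

definition lambda_min :: "real mat \<Rightarrow> real" where
  "lambda_min A = Min {k. eigenvalue A k}"

definition stoch_cond_number :: "nat \<Rightarrow> real mat \<Rightarrow> nat set pmf \<Rightarrow> real" where
  "stoch_cond_number n W S = lambda_min (expect_mat n S (\<lambda>C. proj_sketch W (I_sub n C)))"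

end

theory Submission
  imports Defs
begin

(* Double counting the pairs (C, i) with i in C in supp(S) gives |supp(S)| tau = n c1, and
   summing the inclusion probabilities gives p_1 + ... + p_n = E|S| = tau, so all p_i equal tau/n.
   For diagonal W the Gram matrix I_C^T W I_C is diagonal and invertible, so the projection for
   the sketch I_C is the coordinate projection diag(1[i in C]); hence E[Pi] = diag(p_1, ..., p_n),
   whose smallest eigenvalue is min_i p_i. *)

lemma is_sampling_finite_support: "is_sampling n S \<Longrightarrow> finite (set_pmf S)"
  unfolding is_sampling_def by (rule finite_subset[of _ "Pow {..<n}"]) auto

lemma is_sampling_subset: "is_sampling n S \<Longrightarrow> C \<in> set_pmf S \<Longrightarrow> C \<subseteq> {..<n}"
  unfolding is_sampling_def by blast

lemma tau_uniform_card: "tau_uniform n \<tau> S \<Longrightarrow> C \<in> set_pmf S \<Longrightarrow> card C = \<tau>"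
  unfolding tau_uniform_def by (simp add: AE_measure_pmf_iff)

lemma sum_if_mem_eq_card_mult:
  assumes "finite A" "C \<subseteq> A"
  shows "(\<Sum>i\<in>A. if i \<in> C then c else 0) = of_nat (card C) * (c :: 'a :: semiring_1)"
proof -
  have "A \<inter> {i. i \<in> C} = C" using assms(2) by blast
  then show ?thesis using assms(1) by (simp add: sum.If_cases)
qed

lemma sum_card_eq_sum_card_containing:
  assumes "finite P" "finite A" "\<And>C. C \<in> P \<Longrightarrow> C \<subseteq> A"
  shows "(\<Sum>C\<in>P. card C) = (\<Sum>i\<in>A. card {C \<in> P. i \<in> C})"
proof -
  have "(\<Sum>C\<in>P. card C) = (\<Sum>C\<in>P. \<Sum>i\<in>A. if i \<in> C then 1 else 0)"
    using assms by (intro sum.cong refl) (simp add: sum_if_mem_eq_card_mult)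
  also have "\<dots> = (\<Sum>i\<in>A. \<Sum>C\<in>P. if i \<in> C then 1 else 0)"
    by (rule sum.swap)
  also have "\<dots> = (\<Sum>i\<in>A. card {C \<in> P. i \<in> C})"
    using assms(1) by (intro sum.cong refl) (simp add: sum.inter_filter[symmetric])
  finally show ?thesis .
qed

lemma card_support_mult_eq:
  assumes "is_sampling n S" "uniform_support n c1 S" "\<And>C. C \<in> set_pmf S \<Longrightarrow> card C = \<tau>"
  shows "card (set_pmf S) * \<tau> = n * c1"
proof -
  have "card (set_pmf S) * \<tau> = (\<Sum>C\<in>set_pmf S. card C)"
    using assms(3) by simp
  also have "\<dots> = (\<Sum>i<n. card {C \<in> set_pmf S. i \<in> C})"
    using assms(1) is_sampling_finite_support is_sampling_subset
    by (intro sum_card_eq_sum_card_containing) auto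
  also have "\<dots> = n * c1"
    using assms(2) by (simp add: uniform_support_def)
  finally show ?thesis .
qed

lemma tau_uniform_bounds:
  assumes "is_sampling n S" "non_vacuous S" "tau_uniform n \<tau> S"
  shows "0 < \<tau>" "\<tau> \<le> n"
proof -
  obtain C where C: "C \<in> set_pmf S" using set_pmf_not_empty[of S] by blast
  have sub: "C \<subseteq> {..<n}" using assms(1) C by (rule is_sampling_subset)
  have "C \<noteq> {}" using assms(2) C by (auto simp: non_vacuous_def set_pmf_iff)
  moreover have "finite C" using sub by (rule finite_subset) simp
  moreover have "card C = \<tau>" using assms(3) C by (rule tau_uniform_card)
  ultimately show "0 < \<tau>" by auto
  show "\<tau> \<le> n" using card_mono[OF _ sub] \<open>card C = \<tau>\<close> by simp
qed

lemma incl_prob_eq_sum: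
  assumes "finite (set_pmf S)"
  shows "incl_prob S i = (\<Sum>C\<in>set_pmf S. if i \<in> C then pmf S C else 0)"
proof -
  have "incl_prob S i = measure_pmf.prob S ({C. i \<in> C} \<inter> set_pmf S)"
    unfolding incl_prob_def
    by (intro measure_pmf.finite_measure_eq_AE) (auto simp: AE_measure_pmf_iff)
  also have "\<dots> = sum (pmf S) ({C. i \<in> C} \<inter> set_pmf S)"
    using assms by (simp add: measure_measure_pmf_finite)
  also have "\<dots> = (\<Sum>C\<in>set_pmf S. if i \<in> C then pmf S C else 0)"
    using assms by (simp add: sum.inter_restrict Int_commute)
  finally show ?thesis .
qed

lemma sum_incl_prob_eq_card:
  assumes "is_sampling n S" "\<And>C. C \<in> set_pmf S \<Longrightarrow> card C = \<tau>"
  shows "(\<Sum>i<n. incl_prob S i) = \<tau>"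
proof -
  have fin: "finite (set_pmf S)" using assms(1) by (rule is_sampling_finite_support)
  have "(\<Sum>i<n. incl_prob S i) = (\<Sum>C\<in>set_pmf S. \<Sum>i<n. if i \<in> C then pmf S C else 0)"
    unfolding incl_prob_eq_sum[OF fin] by (rule sum.swap)
  also have "\<dots> = (\<Sum>C\<in>set_pmf S. \<tau> * pmf S C)"
    using assms is_sampling_subset by (intro sum.cong refl) (simp add: sum_if_mem_eq_card_mult)
  also have "\<dots> = \<tau>"
    using sum_pmf_eq_1[OF fin order.refl] by (simp flip: sum_distrib_left)
  finally show ?thesis .
qed

lemma incl_prob_tau_uniform:
  assumes "is_sampling n S" "tau_uniform n \<tau> S" "i < n"
  shows "incl_prob S i = \<tau> / n"
proof -
  have "incl_prob S j = incl_prob S i" if "j < n" for j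
    using assms(2,3) that unfolding tau_uniform_def by blast
  then have "(\<Sum>j<n. incl_prob S j) = (\<Sum>j<n. incl_prob S i)"
    by (intro sum.cong) simp_all
  then have "real n * incl_prob S i = \<tau>"
    using sum_incl_prob_eq_card[OF assms(1) tau_uniform_card[OF assms(2)]] by simp
  then show ?thesis using assms(3) by (simp add: field_simps)
qed

lemma diag_real_mat_eq_mat_diag: "diag_real_mat n w = mat_diag n w"
  unfolding diag_real_mat_def mat_diag_def by (rule cong_mat) auto

lemma mat_diag_cong: "(\<And>i. i < n \<Longrightarrow> f i = g i) \<Longrightarrow> mat_diag n f = mat_diag n g"
  unfolding mat_diag_def by (rule cong_mat) auto

lemma sum_sorted_list_of_set_nth:
  assumes "finite C"
  shows "(\<Sum>b<card C. f (sorted_list_of_set C ! b)) = (\<Sum>c\<in>C. f c)"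
  using assms sum_list_distinct_conv_sum_set[of "sorted_list_of_set C" f]
  by (simp add: sum_list_sum_nth atLeast0LessThan)

lemma pinv_eq_inverse:
  assumes A: "A \<in> carrier_mat n n" and B: "B \<in> carrier_mat n n"
    and AB: "A * B = 1\<^sub>m n" and BA: "B * A = 1\<^sub>m n"
  shows "pinv A = B"
  unfolding pinv_def
proof (rule the_equality)
  show "B \<in> carrier_mat (dim_col A) (dim_row A) \<and> A * B * A = A \<and> B * A * B = B
      \<and> transpose_mat (A * B) = A * B \<and> transpose_mat (B * A) = B * A"
    using A B by (simp add: AB BA)
next
  fix X assume "X \<in> carrier_mat (dim_col A) (dim_row A) \<and> A * X * A = A \<and> X * A * X = X
      \<and> transpose_mat (A * X) = A * X \<and> transpose_mat (X * A) = X * A"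
  then have X: "X \<in> carrier_mat n n" and AXA: "A * X * A = A" using A by auto
  have "X = (B * A) * X * (A * B)" using X by (simp add: AB BA)
  also have "\<dots> = B * (A * X * A) * B" using A B X by (simp add: assoc_mult_mat[of _ n n _ n _ n])
  also have "\<dots> = B" using A B by (simp add: AXA BA)
  finally show "X = B" .
qed

lemma pinv_mat_diag:
  fixes f :: "nat \<Rightarrow> real"
  assumes "\<And>i. i < n \<Longrightarrow> f i \<noteq> 0"
  shows "pinv (mat_diag n f) = mat_diag n (\<lambda>i. 1 / f i)"
proof (rule pinv_eq_inverse)
  have "mat_diag n f * mat_diag n (\<lambda>i. 1 / f i) = mat_diag n (\<lambda>_. 1)"
    unfolding mat_diag_diag using assms by (intro mat_diag_cong) simp
  then show "mat_diag n f * mat_diag n (\<lambda>i. 1 / f i) = 1\<^sub>m n" by simp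
  have "mat_diag n (\<lambda>i. 1 / f i) * mat_diag n f = mat_diag n (\<lambda>_. 1)"
    unfolding mat_diag_diag using assms by (intro mat_diag_cong) simp
  then show "mat_diag n (\<lambda>i. 1 / f i) * mat_diag n f = 1\<^sub>m n" by simp
qed simp_all

lemma I_sub_carrier: "I_sub n C \<in> carrier_mat n (card C)"
  by (simp add: I_sub_def)

lemma I_sub_index:
  "i < n \<Longrightarrow> b < card C \<Longrightarrow> I_sub n C $$ (i, b) = (if i = sorted_list_of_set C ! b then 1 else 0)"
  by (simp add: I_sub_def)

lemma I_sub_transpose_mult_mat_diag_mult:
  assumes C: "finite C" "C \<subseteq> {..<n}"
  shows "transpose_mat (I_sub n C) * mat_diag n f * I_sub n C
    = mat_diag (card C) (\<lambda>a. f (sorted_list_of_set C ! a))"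
proof (rule eq_matI)
  let ?l = "sorted_list_of_set C"
  fix a b assume "a < dim_row (mat_diag (card C) (\<lambda>a. f (?l ! a)))"
    "b < dim_col (mat_diag (card C) (\<lambda>a. f (?l ! a)))"
  then have a: "a < card C" and b: "b < card C" by (auto simp: mat_diag_def)
  have la: "?l ! a < n" using a C by (metis length_sorted_list_of_set nth_mem set_sorted_list_of_set lessThan_iff subsetD)
  have "(transpose_mat (I_sub n C) * mat_diag n f * I_sub n C) $$ (a, b)
      = (\<Sum>k<n. if k = ?l ! a \<and> k = ?l ! b then f k else 0)"
    using a b I_sub_carrier[of n C]
    by (auto simp: mat_diag_mult_right[of _ "card C" n] scalar_prod_def I_sub_index atLeast0LessThan
        intro!: sum.cong)
  also have "\<dots> = (if ?l ! a = ?l ! b then f (?l ! a) else 0)"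
    using la by (cases "?l ! a = ?l ! b") (auto intro!: sum.neutral)
  also have "\<dots> = mat_diag (card C) (\<lambda>a. f (?l ! a)) $$ (a, b)"
    using a b C(1) by (simp add: mat_diag_def nth_eq_iff_index_eq)
  finally show "(transpose_mat (I_sub n C) * mat_diag n f * I_sub n C) $$ (a, b)
      = mat_diag (card C) (\<lambda>a. f (?l ! a)) $$ (a, b)" .
qed (simp_all add: I_sub_def mat_diag_def)

lemma I_sub_mult_mat_diag_mult_transpose:
  assumes "finite C"
  shows "I_sub n C * mat_diag (card C) (\<lambda>a. f (sorted_list_of_set C ! a)) * transpose_mat (I_sub n C)
    = mat_diag n (\<lambda>i. if i \<in> C then f i else 0)"
proof (rule eq_matI)
  let ?l = "sorted_list_of_set C"
  fix i j assume "i < dim_row (mat_diag n (\<lambda>i. if i \<in> C then f i else 0))"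
    "j < dim_col (mat_diag n (\<lambda>i. if i \<in> C then f i else 0))"
  then have i: "i < n" and j: "j < n" by (auto simp: mat_diag_def)
  have "(I_sub n C * mat_diag (card C) (\<lambda>a. f (?l ! a)) * transpose_mat (I_sub n C)) $$ (i, j)
      = (\<Sum>b<card C. (\<lambda>c. if c = i \<and> c = j then f c else 0) (?l ! b))"
    using i j I_sub_carrier[of n C]
    by (auto simp: mat_diag_mult_right[of _ n "card C"] scalar_prod_def I_sub_index atLeast0LessThan
        intro!: sum.cong)
  also have "\<dots> = (\<Sum>c\<in>C. if c = i \<and> c = j then f c else 0)"
    by (rule sum_sorted_list_of_set_nth[OF assms])
  also have "\<dots> = mat_diag n (\<lambda>i. if i \<in> C then f i else 0) $$ (i, j)"
    using i j assms by (cases "i = j") (auto simp: mat_diag_def intro!: sum.neutral)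
  finally show "(I_sub n C * mat_diag (card C) (\<lambda>a. f (?l ! a)) * transpose_mat (I_sub n C)) $$ (i, j)
      = mat_diag n (\<lambda>i. if i \<in> C then f i else 0) $$ (i, j)" .
qed (simp_all add: I_sub_def mat_diag_def)

lemma proj_sketch_I_sub_mat_diag:
  assumes C: "finite C" "C \<subseteq> {..<n}" and w: "\<forall>i\<in>C. w i \<noteq> 0"
  shows "proj_sketch (mat_diag n w) (I_sub n C) = mat_diag n (\<lambda>i. if i \<in> C then 1 else 0)"
proof -
  let ?l = "sorted_list_of_set C"
  have nz: "w (?l ! a) \<noteq> 0" if "a < card C" for a
    using w that C(1) by (metis length_sorted_list_of_set nth_mem set_sorted_list_of_set)
  have "pinv (transpose_mat (I_sub n C) * mat_diag n w * I_sub n C)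
      = mat_diag (card C) (\<lambda>a. 1 / w (?l ! a))"
    unfolding I_sub_transpose_mult_mat_diag_mult[OF C]
    using nz by (intro pinv_mat_diag)
  then have "proj_sketch (mat_diag n w) (I_sub n C)
      = mat_diag n (\<lambda>i. if i \<in> C then 1 / w i else 0) * mat_diag n w"
    unfolding proj_sketch_def using I_sub_mult_mat_diag_mult_transpose[OF C(1), of n "\<lambda>i. 1 / w i"]
    by simp
  also have "\<dots> = mat_diag n (\<lambda>i. if i \<in> C then 1 else 0)"
    using w by (auto intro!: mat_diag_cong)
  finally show ?thesis .
qed

lemma expect_mat_mat_diag:
  "expect_mat n S (\<lambda>C. mat_diag n (g C)) = mat_diag n (\<lambda>i. \<Sum>C\<in>set_pmf S. pmf S C * g C i)"
  unfolding expect_mat_def mat_diag_def by (rule cong_mat) auto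

lemma eigenvalue_mat_diag_iff:
  "eigenvalue (mat_diag n f) k \<longleftrightarrow> (\<exists>i<n. f i = (k :: 'a :: field))"
proof -
  have "upper_triangular (mat_diag n f)"
    by (auto simp: mat_diag_def)
  moreover have "diag_mat (mat_diag n f) = map f [0..<n]"
    by (auto simp: diag_mat_def mat_diag_def)
  ultimately have "char_poly (mat_diag n f) = (\<Prod>a\<leftarrow>map f [0..<n]. [:- a, 1:])"
    by (simp add: char_poly_upper_triangular[of _ n])
  then show ?thesis
    by (auto simp: eigenvalue_root_char_poly[of _ n] poly_prod_list_zero_iff)
qed

lemma lambda_min_mat_diag:
  assumes "n > 0"
  shows "lambda_min (mat_diag n f) = Min (f ` {..<n})"
proof -
  have "{k. \<exists>i<n. f i = k} = f ` {..<n}" by auto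
  then show ?thesis by (simp add: lambda_min_def eigenvalue_mat_diag_iff)
qed

lemma expect_proj_sketch_I_sub_diag:
  assumes "is_sampling n S" "\<And>i. i < n \<Longrightarrow> w i \<noteq> 0"
  shows "expect_mat n S (\<lambda>C. proj_sketch (diag_real_mat n w) (I_sub n C)) = mat_diag n (incl_prob S)"
proof -
  have "proj_sketch (diag_real_mat n w) (I_sub n C) = mat_diag n (\<lambda>i. if i \<in> C then 1 else 0)"
    if "C \<in> set_pmf S" for C
  proof -
    have "C \<subseteq> {..<n}" using assms(1) that by (rule is_sampling_subset)
    moreover from this have "finite C" by (rule finite_subset) simp
    ultimately show ?thesis
      unfolding diag_real_mat_eq_mat_diag using assms(2) by (intro proj_sketch_I_sub_mat_diag) auto
  qed
  then have "expect_mat n S (\<lambda>C. proj_sketch (diag_real_mat n w) (I_sub n C))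
      = expect_mat n S (\<lambda>C. mat_diag n (\<lambda>i. if i \<in> C then 1 else 0))"
    by (simp add: expect_mat_def)
  also have "\<dots> = mat_diag n (incl_prob S)"
    unfolding expect_mat_mat_diag
    by (rule mat_diag_cong)
      (auto simp: incl_prob_eq_sum[OF is_sampling_finite_support[OF assms(1)]] intro!: sum.cong)
  finally show ?thesis .
qed

lemma stoch_cond_number_diag_eq_Min_incl_prob:
  assumes "is_sampling n S" "\<And>i. i < n \<Longrightarrow> w i \<noteq> 0" "n > 0"
  shows "stoch_cond_number n (diag_real_mat n w) S = Min (incl_prob S ` {..<n})"
proof -
  have expectation: "expect_mat n S (\<lambda>C. proj_sketch (diag_real_mat n w) (I_sub n C)) = mat_diag n (incl_prob S)"
    by (rule expect_proj_sketch_I_sub_diag[OF assms(1,2)])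
  show ?thesis
    unfolding stoch_cond_number_def expectation using assms(3) by (rule lambda_min_mat_diag)
qed

lemma stoch_cond_number_tau_uniform:
  assumes "is_sampling n S" "tau_uniform n \<tau> S" "\<And>i. i < n \<Longrightarrow> w i \<noteq> 0" "n > 0"
  shows "stoch_cond_number n (diag_real_mat n w) S = \<tau> / n"
proof -
  have "incl_prob S ` {..<n} = (\<lambda>_. \<tau> / n) ` {..<n}"
    using incl_prob_tau_uniform[OF assms(1,2)] by (intro image_cong) simp_all
  also have "\<dots> = {\<tau> / n}"
    using assms(4) by (auto simp: image_constant_conv)
  finally show ?thesis
    using stoch_cond_number_diag_eq_Min_incl_prob[OF assms(1,3,4)] by simp
qed

theorem lemma4p8:
  fixes n c1 \<tau> :: nat and S :: "nat set pmf" and w :: "nat \<Rightarrow> real"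
  assumes "is_sampling n S"
    and "non_vacuous S"
    and "uniform_support n c1 S" and "c1 \<ge> 1"
    and "tau_uniform n \<tau> S"
    and "\<forall>i<n. w i > 0"
  shows "real (card (set_pmf S)) / real c1 = real n / real \<tau>
     \<and> stoch_cond_number n (diag_real_mat n w) S = real \<tau> / real n
     \<and> (\<forall>i<n. incl_prob S i = real \<tau> / real n)
     \<and> real \<tau> / real n = real c1 / real (card (set_pmf S))"
proof -
  have "\<tau> > 0" "n > 0"
    using tau_uniform_bounds[OF assms(1,2,5)] by linarith+
  have "card (set_pmf S) > 0"
    using is_sampling_finite_support[OF assms(1)] set_pmf_not_empty[of S] by (simp add: card_gt_0_iff)
  have count: "card (set_pmf S) * \<tau> = n * c1"
    using assms(1,3) tau_uniform_card[OF assms(5)] by (rule card_support_mult_eq)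
  have p: "\<forall>i<n. incl_prob S i = \<tau> / n"
    using incl_prob_tau_uniform[OF assms(1,5)] by blast
  have kappa: "stoch_cond_number n (diag_real_mat n w) S = \<tau> / n"
    using stoch_cond_number_tau_uniform[OF assms(1,5) _ \<open>n > 0\<close>] assms(6) by (metis less_irrefl)
  have r1: "real (card (set_pmf S)) / c1 = n / \<tau>"
    using count \<open>\<tau> > 0\<close> assms(4) by (simp add: field_simps flip: of_nat_mult)
  have r2: "real \<tau> / n = c1 / real (card (set_pmf S))"
    using count \<open>n > 0\<close> \<open>card (set_pmf S) > 0\<close> by (simp add: field_simps flip: of_nat_mult)
  show ?thesis using r1 kappa p r2 by simp
qed

end
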